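(* Let $d\ge 1$ and $q\ge 1$, let $\mathbf c_1,\dots,\mathbf c_q\in\mathbb R^d$ be discrete lattice velocities with weights $w_1,\dots,w_q>0$ and lattice speed of sound $c_s>0$, and let $\mathbf h:\mathbb R^d\to\mathbb R^q$ be given componentwise by $$h_i(\mathbf u)=\sqrt{w_i}\Big(1+\frac{\mathbf c_i\cdot\mathbf u}{2c_s^2}+\frac{(\mathbf c_i\cdot\mathbf u)^2}{8c_s^4}-\frac{\|\mathbf u\|^2}{4c_s^2}\Big).$$ For $\hat{\mathbf u}\in\mathbb R^d$ let $\bar J(\hat{\mathbf u})=[\mathbf h(\hat{\mathbf u}),\partial_1\mathbf h(\hat{\mathbf u}),\dots,\partial_d\mathbf h(\hat{\mathbf u})]\in\mathbb R^{q\times(d+1)}$, and, whenever $\bar J(\hat{\mathbf u})$ has full column rank, define the denoising operator $\mathcal D(\hat{\mathbf u})=\bar J(\hat{\mathbf u})\big(\bar J(\hat{\mathbf u})^\top\bar J(\hat{\mathbf u})\big)^{-1}\bar J(\hat{\mathbf u})^\top$ (the orthogonal projector onto the column space of $\bar J(\hat{\mathbf u})$). Let $g$ be a lattice symmetry, i.e. an orthogonal map $R_g\in O(d)$ together with a permutation $\sigma_g$ of $\{1,\dots,q\}$ such that $\mathbf c_{\sigma_g(i)}=R_g\mathbf c_i$ and $w_{\sigma_g(i)}=w_i$ for all $i$, and let $P_g\in\mathbb R^{q\times q}$ be the permutation matrix with $(P_g\mathbf f)_i=f_{\sigma_g^{-1}(i)}$ for $\mathbf f\in\mathbb R^q$.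 Then for every $\hat{\mathbf u}\in\mathbb R^d$ with $\bar J(\hat{\mathbf u})$ of full column rank, $\bar J(R_g\hat{\mathbf u})$ also has full column rank and $$\mathcal D(R_g\hat{\mathbf u})\,P_g=P_g\,\mathcal D(\hat{\mathbf u}).$$
   Context: This is the setting of a D$d$Q$q$ lattice Boltzmann model. The lattice is assumed to satisfy the standard isotropy conditions: $\sum_i w_i=1$, $\sum_i w_i c_{ik}c_{il}=c_s^2\delta_{kl}$, $\sum_i w_i c_{ik}c_{il}c_{ip}c_{iq}=c_s^4(\delta_{kl}\delta_{pq}+\delta_{kp}\delta_{lq}+\delta_{kq}\delta_{lp})$, and all weighted velocity moments of orders 1, 3 and 5 vanish. The function $\mathbf h$ is the (second-order) square-root equilibrium amplitude per unit density, $\partial_k$ denotes the partial derivative with respect to the $k$-th velocity component. *)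

theory Defs
  imports "HOL-Analysis.Analysis"
begin

definition hfun :: "('q \<Rightarrow> real^'d) \<Rightarrow> ('q \<Rightarrow> real) \<Rightarrow> real \<Rightarrow> real^'d \<Rightarrow> real^'q" where
  "hfun c w cs u = (\<chi> i. sqrt (w i) * (1 + (c i \<bullet> u) / (2 * cs^2)
       + (c i \<bullet> u)^2 / (8 * cs^4) - (norm u)^2 / (4 * cs^2)))"

definition partial :: "'d \<Rightarrow> (real^'d \<Rightarrow> real^'q) \<Rightarrow> real^'d \<Rightarrow> real^'q" where
  "partial k f u = vector_derivative (\<lambda>t. f (u + t *\<^sub>R axis k 1)) (at 0)"

text \<open>The q x (d+1) matrix [h, d_1 h, ..., d_d h]; column None is h,
  column Some k is the k-th partial derivative.\<close>
definition Jbar :: "('q::finite \<Rightarrow> real^'d::finite) \<Rightarrow> ('q \<Rightarrow> real) \<Rightarrow> real \<Rightarrow> real^'d \<Rightarrow> real^('d option)^'q" where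
  "Jbar c w cs u = (\<chi> i j. (case j of None \<Rightarrow> hfun c w cs u
                                   | Some k \<Rightarrow> partial k (hfun c w cs) u) $ i)"

definition full_col_rank :: "real^'n::finite^'m::finite \<Rightarrow> bool" where
  "full_col_rank A \<longleftrightarrow> rank A = CARD('n)"

definition denoise :: "('q::finite \<Rightarrow> real^'d::finite) \<Rightarrow> ('q \<Rightarrow> real) \<Rightarrow> real \<Rightarrow> real^'d \<Rightarrow> real^'q^'q" where
  "denoise c w cs u = (let J = Jbar c w cs u in
     J ** matrix_inv (transpose J ** J) ** transpose J)"

definition perm_matrix :: "('q::finite \<Rightarrow> 'q) \<Rightarrow> real^'q^'q" where
  "perm_matrix \<sigma> = (\<chi> i j. if j = inv \<sigma> i then 1 else 0)"

definition isotropic_lattice :: "('q::finite \<Rightarrow> real^'d::finite) \<Rightarrow> ('q \<Rightarrow> real) \<Rightarrow> real \<Rightarrow> bool" where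
  "isotropic_lattice c w cs \<longleftrightarrow>
     (\<Sum>i\<in>UNIV. w i) = 1
   \<and> (\<forall>k l. (\<Sum>i\<in>UNIV. w i * c i $ k * c i $ l) = cs^2 * (if k = l then 1 else 0))
   \<and> (\<forall>k l p r. (\<Sum>i\<in>UNIV. w i * c i $ k * c i $ l * c i $ p * c i $ r) =
        cs^4 * ((if k = l \<and> p = r then 1 else 0) + (if k = p \<and> l = r then 1 else 0)
                + (if k = r \<and> l = p then 1 else 0)))
   \<and> (\<forall>k. (\<Sum>i\<in>UNIV. w i * c i $ k) = 0)
   \<and> (\<forall>k l p. (\<Sum>i\<in>UNIV. w i * c i $ k * c i $ l * c i $ p) = 0)
   \<and> (\<forall>k l p r s. (\<Sum>i\<in>UNIV. w i * c i $ k * c i $ l * c i $ p * c i $ r * c i $ s) = 0)"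

end

theory Submission
  imports Defs
begin

text \<open>A lattice symmetry gives \<open>h (R *v u) $ \<sigma> j = h u $ j\<close>, and differentiating,
  \<open>\<partial>\<^sub>k h (R *v u) $ \<sigma> j = (\<Sum>l. R $ k $ l * \<partial>\<^sub>l h u $ j)\<close>. Hence
  \<open>J (R *v u) = P ** J u ** M\<close> with \<open>P\<close> the permutation matrix and \<open>M = diag(1, R\<^sup>T)\<close>, both
  orthogonal. Orthogonal factors pass through the Gram matrix, so the projector onto the column
  space of \<open>P ** J ** M\<close> is \<open>P ** D ** P\<^sup>T\<close>, where \<open>D\<close> is the projector of \<open>J\<close>.\<close>

lemma matrix_inv_unique:
  fixes A :: "'a::semiring_1^'n^'m" and B :: "'a^'m^'n"
  assumes AB: "A ** B = mat 1" and BA: "B ** A = mat 1"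
  shows "matrix_inv A = B"
proof -
  have inv: "A ** matrix_inv A = mat 1 \<and> matrix_inv A ** A = mat 1"
    unfolding matrix_inv_def using AB BA by (rule someI[of _ B, OF conjI])
  then have "matrix_inv A = (B ** A) ** matrix_inv A" by (simp add: BA)
  also have "\<dots> = B" using inv by (simp flip: matrix_mul_assoc)
  finally show ?thesis .
qed

lemma matrix_mul_cancel_inverse:
  fixes A :: "'a::semiring_1^'n^'m" and B :: "'a^'m^'n"
  assumes "A ** B = mat 1"
  shows "A ** (B ** X) = X"
  by (simp add: matrix_mul_assoc assms)

lemma full_col_rank_iff_inj: "full_col_rank A \<longleftrightarrow> inj ((*v) A)"
  by (simp add: full_col_rank_def full_rank_injective)

lemma orthogonal_transformation_matrix_vector_mult:
  fixes Q :: "real^'n^'n"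
  shows "orthogonal_matrix Q \<Longrightarrow> orthogonal_transformation ((*v) Q)"
  by (simp add: orthogonal_transformation_matrix matrix_vector_mul_linear)

lemma full_col_rank_orthogonal_mult:
  fixes J :: "real^'n^'m" and P :: "real^'m^'m" and M :: "real^'n^'n"
  assumes "orthogonal_matrix P" "orthogonal_matrix M" "full_col_rank J"
  shows "full_col_rank (P ** J ** M)"
proof -
  have "inj ((*v) P)" "inj ((*v) M)"
    using assms(1,2)
    by (simp_all add: orthogonal_transformation_inj orthogonal_transformation_matrix_vector_mult)
  then have "inj ((*v) P \<circ> (*v) J \<circ> (*v) M)"
    using assms(3) unfolding full_col_rank_iff_inj by (intro inj_compose)
  then show ?thesis
    by (simp add: full_col_rank_iff_inj comp_def matrix_vector_mul_assoc)
qed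

lemma invertible_gram_matrix:
  fixes J :: "real^'n^'m"
  assumes "full_col_rank J"
  shows "invertible (transpose J ** J)"
  unfolding invertible_left_inverse matrix_left_invertible_ker
proof (intro allI impI)
  fix x assume "(transpose J ** J) *v x = 0"
  then have "transpose J *v (J *v x) = 0"
    by (simp only: matrix_vector_mul_assoc)
  then have "(J *v x) \<bullet> (J *v x) = 0"
    using dot_lmul_matrix[of x "transpose J" "J *v x"]
    by (simp only: vector_transpose_matrix inner_zero_right)
  then have "J *v x = J *v 0"
    by (simp only: matrix_vector_mult_0_right inner_eq_zero_iff)
  then show "x = 0"
    using assms unfolding full_col_rank_iff_inj by (blast dest: injD)
qed

definition col_projector :: "real^'n::finite^'m::finite \<Rightarrow> real^'m^'m" where
  "col_projector J = J ** matrix_inv (transpose J ** J) ** transpose J"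

lemma col_projector_orthogonal_mult:
  fixes J :: "real^'n^'m" and P :: "real^'m^'m" and M :: "real^'n^'n"
  assumes P: "orthogonal_matrix P" and M: "orthogonal_matrix M" and J: "full_col_rank J"
  shows "col_projector (P ** J ** M) = P ** col_projector J ** transpose P"
proof -
  let ?G = "transpose J ** J"
  obtain G' where G': "?G ** G' = mat 1" "G' ** ?G = mat 1"
    using invertible_gram_matrix[OF J] unfolding invertible_def by blast
  have PP: "transpose P ** P = mat 1"
    and MM: "M ** transpose M = mat 1" "transpose M ** M = mat 1"
    using P M by (simp_all add: orthogonal_matrix_def)
  note cancel = matrix_mul_cancel_inverse[OF PP] matrix_mul_cancel_inverse[OF MM(1)]
    matrix_mul_cancel_inverse[OF MM(2)] matrix_mul_cancel_inverse[OF G'(1), folded matrix_mul_assoc]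
    matrix_mul_cancel_inverse[OF G'(2), folded matrix_mul_assoc]
  have gram: "transpose (P ** J ** M) ** (P ** J ** M) = transpose M ** (?G ** M)"
    by (simp add: matrix_transpose_mul cancel flip: matrix_mul_assoc)
  have "matrix_inv (transpose M ** (?G ** M)) = transpose M ** (G' ** M)"
    by (rule matrix_inv_unique) (simp_all add: cancel G' MM flip: matrix_mul_assoc)
  then show ?thesis
    using matrix_inv_unique[OF G']
    by (simp add: col_projector_def gram matrix_transpose_mul cancel flip: matrix_mul_assoc)
qed

lemma perm_matrix_mult: "perm_matrix \<sigma> ** X = (\<chi> i. X $ inv \<sigma> i)"
proof -
  have "(if l = inv \<sigma> i then 1 else 0) * X $ l $ b = (if l = inv \<sigma> i then X $ l $ b else 0)"
    for l i b by simp
  then show ?thesis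
    by (simp add: perm_matrix_def matrix_matrix_mult_def vec_eq_iff)
qed

lemma orthogonal_matrix_perm_matrix:
  assumes "\<sigma> permutes (UNIV :: 'q::finite set)"
  shows "orthogonal_matrix (perm_matrix \<sigma> :: real^'q^'q)"
proof -
  have "inj (inv \<sigma>)"
    using assms permutes_inj permutes_inv by blast
  then have "perm_matrix \<sigma> ** transpose (perm_matrix \<sigma>) = (mat 1 :: real^'q^'q)"
    unfolding perm_matrix_mult by (auto simp: perm_matrix_def transpose_def mat_def vec_eq_iff inj_eq)
  then show ?thesis
    using orthogonal_matrix_transpose[of "perm_matrix \<sigma>"] by (simp add: orthogonal_matrix)
qed

definition option_block :: "real^'n^'n \<Rightarrow> real^('n option)^('n option)" where
  "option_block Q = (\<chi> a b. case (a, b) of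
     (None, None) \<Rightarrow> 1 | (Some l, Some k) \<Rightarrow> Q $ l $ k | _ \<Rightarrow> 0)"

lemma sum_UNIV_option: "(\<Sum>a\<in>UNIV. f a) = f None + (\<Sum>l\<in>UNIV. f (Some l))"
  for f :: "'a::finite option \<Rightarrow> 'b::comm_monoid_add"
  by (simp add: UNIV_option_conv sum.reindex)

lemma option_block_mult: "option_block A ** option_block B = option_block (A ** B)"
  by (simp add: vec_eq_iff matrix_matrix_mult_def option_block_def sum_UNIV_option split: option.split)

lemma transpose_option_block: "transpose (option_block Q) = option_block (transpose Q)"
  by (simp add: vec_eq_iff transpose_def option_block_def split: option.split)

lemma option_block_mat_1: "option_block (mat 1) = mat 1"
  by (simp add: vec_eq_iff mat_def option_block_def split: option.split)

lemma orthogonal_matrix_option_block: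
  "orthogonal_matrix Q \<Longrightarrow> orthogonal_matrix (option_block Q)"
  by (simp add: orthogonal_matrix_def transpose_option_block option_block_mult option_block_mat_1)

definition hfun_deriv :: "('q \<Rightarrow> real^'d) \<Rightarrow> ('q \<Rightarrow> real) \<Rightarrow> real \<Rightarrow> 'd \<Rightarrow> real^'d \<Rightarrow> real^'q" where
  "hfun_deriv c w cs k u = (\<chi> i. sqrt (w i) *
     (c i $ k / (2 * cs^2) + (c i \<bullet> u) * c i $ k / (4 * cs^4) - u $ k / (2 * cs^2)))"

lemma hfun_along_axis:
  fixes c :: "'q::finite \<Rightarrow> real^'d::finite"
  shows "hfun c w cs (u + t *\<^sub>R axis k 1) = hfun c w cs u + t *\<^sub>R hfun_deriv c w cs k u
     + t^2 *\<^sub>R (\<chi> i. sqrt (w i) * ((c i $ k)^2 / (8 * cs^4) - 1 / (4 * cs^2)))"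
proof -
  have norm_sq: "(norm (u + t *\<^sub>R axis k 1))^2 = (norm u)^2 + 2 * t * u $ k + t^2"
    unfolding power2_norm_eq_inner
    by (simp add: inner_add_left inner_add_right inner_axis inner_axis' algebra_simps power2_eq_square)
  have expand: "s * (1 + (a + t * b) / (2 * cs^2) + (a + t * b)^2 / (8 * cs^4)
        - (N + 2 * t * x + t^2) / (4 * cs^2))
    = s * (1 + a / (2 * cs^2) + a^2 / (8 * cs^4) - N / (4 * cs^2))
      + t * (s * (b / (2 * cs^2) + a * b / (4 * cs^4) - x / (2 * cs^2)))
      + t^2 * (s * (b^2 / (8 * cs^4) - 1 / (4 * cs^2)))" for s a b N x :: real
    by (cases "cs = 0") (simp_all add: field_simps power2_eq_square)
  show ?thesis
    by (simp add: vec_eq_iff hfun_def hfun_deriv_def norm_sq inner_add_right inner_axis expand)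
qed

lemma has_vector_derivative_quadratic_at_0:
  fixes a b e :: "'a::real_normed_vector"
  shows "((\<lambda>t. a + t *\<^sub>R b + t^2 *\<^sub>R e) has_vector_derivative b) (at 0)"
  by (auto intro!: derivative_eq_intros)

lemma partial_hfun:
  fixes c :: "'q::finite \<Rightarrow> real^'d::finite"
  shows "partial k (hfun c w cs) u = hfun_deriv c w cs k u"
  unfolding partial_def hfun_along_axis
  by (rule vector_derivative_at[OF has_vector_derivative_quadratic_at_0])

lemma hfun_symmetric:
  fixes c :: "'q::finite \<Rightarrow> real^'d::finite"
  assumes R: "orthogonal_matrix R"
    and c_sym: "\<And>i. c (\<sigma> i) = R *v c i" and w_sym: "\<And>i. w (\<sigma> i) = w i"
  shows "hfun c w cs (R *v u) $ \<sigma> j = hfun c w cs u $ j"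
  using orthogonal_transformation_matrix_vector_mult[OF R]
  by (simp add: hfun_def c_sym w_sym orthogonal_transformation_def orthogonal_transformation_norm)

lemma hfun_deriv_symmetric:
  fixes c :: "'q::finite \<Rightarrow> real^'d::finite"
  assumes R: "orthogonal_matrix R"
    and c_sym: "\<And>i. c (\<sigma> i) = R *v c i" and w_sym: "\<And>i. w (\<sigma> i) = w i"
  shows "hfun_deriv c w cs k (R *v u) $ \<sigma> j
    = (\<Sum>l\<in>UNIV. R $ k $ l * hfun_deriv c w cs l u $ j)"
proof -
  have "(R *v c j) \<bullet> (R *v u) = c j \<bullet> u"
    using orthogonal_transformation_matrix_vector_mult[OF R] by (simp add: orthogonal_transformation_def)
  then show ?thesis
    by (simp add: hfun_deriv_def c_sym w_sym matrix_vector_mult_def sum_divide_distrib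
        sum_distrib_left sum_distrib_right flip: sum_subtractf sum.distrib)
      (simp add: algebra_simps)
qed

lemma Jbar_symmetric:
  fixes c :: "'q::finite \<Rightarrow> real^'d::finite"
  assumes R: "orthogonal_matrix R" and \<sigma>: "\<sigma> permutes UNIV"
    and c_sym: "\<And>i. c (\<sigma> i) = R *v c i" and w_sym: "\<And>i. w (\<sigma> i) = w i"
  shows "Jbar c w cs (R *v u) = perm_matrix \<sigma> ** Jbar c w cs u ** option_block (transpose R)"
proof (rule vec_eq_iff[THEN iffD2], intro allI)
  fix i
  obtain j where i: "i = \<sigma> j"
    using permutes_surj[OF \<sigma>] by (metis surjD)
  have "Jbar c w cs (R *v u) $ \<sigma> j $ b = (Jbar c w cs u ** option_block (transpose R)) $ j $ b" for b
    by (cases b) (simp_all add: Jbar_def partial_hfun matrix_matrix_mult_def option_block_def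
        sum_UNIV_option transpose_def mult.commute
        hfun_symmetric[where c=c and w=w and \<sigma>=\<sigma>, OF R c_sym w_sym]
        hfun_deriv_symmetric[where c=c and w=w and \<sigma>=\<sigma>, OF R c_sym w_sym])
  then show "Jbar c w cs (R *v u) $ i
      = (perm_matrix \<sigma> ** Jbar c w cs u ** option_block (transpose R)) $ i"
    using permutes_inverses(2)[OF \<sigma>]
    unfolding i matrix_mul_assoc[symmetric] unfolding perm_matrix_mult
    by (simp add: vec_eq_iff)
qed

lemma denoise_eq_col_projector: "denoise c w cs u = col_projector (Jbar c w cs u)"
  by (simp add: denoise_def col_projector_def Let_def)

theorem mainTheorem1:
  fixes c :: "'q::finite \<Rightarrow> real^'d::finite"
    and w :: "'q \<Rightarrow> real" and cs :: real
    and R :: "real^'d^'d" and \<sigma> :: "'q \<Rightarrow> 'q" and u :: "real^'d"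
  assumes w_pos: "\<And>i. w i > 0"
    and cs_pos: "cs > 0"
    and iso: "isotropic_lattice c w cs"
    and R_orth: "orthogonal_matrix R"
    and \<sigma>_perm: "\<sigma> permutes UNIV"
    and c_sym: "\<And>i. c (\<sigma> i) = R *v c i"
    and w_sym: "\<And>i. w (\<sigma> i) = w i"
    and fcr: "full_col_rank (Jbar c w cs u)"
  shows "full_col_rank (Jbar c w cs (R *v u))
    \<and> denoise c w cs (R *v u) ** perm_matrix \<sigma> = perm_matrix \<sigma> ** denoise c w cs u"
proof -
  let ?P = "perm_matrix \<sigma>" and ?M = "option_block (transpose R)"
  have P: "orthogonal_matrix ?P"
    using \<sigma>_perm by (rule orthogonal_matrix_perm_matrix)
  have M: "orthogonal_matrix ?M"
    using R_orth by (simp add: orthogonal_matrix_option_block)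
  have J: "Jbar c w cs (R *v u) = ?P ** Jbar c w cs u ** ?M"
    using Jbar_symmetric[where c=c and w=w, OF R_orth \<sigma>_perm c_sym w_sym] .
  have "denoise c w cs (R *v u) ** ?P = ?P ** denoise c w cs u ** (transpose ?P ** ?P)"
    by (simp add: denoise_eq_col_projector J col_projector_orthogonal_mult[OF P M fcr]
        matrix_mul_assoc)
  then show ?thesis
    using J full_col_rank_orthogonal_mult[OF P M fcr] P by (simp add: orthogonal_matrix_def)
qed

end
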